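(* Let $A\in\mathbb{C}^{N\times N}$ with $\|A\|\leq1$, with Jordan decomposition $A=P\Lambda P^{-1}$, $\Lambda=\Lambda_1\oplus\cdots\oplus\Lambda_M$ where $\Lambda_j$ is a Jordan block with eigenvalue $\lambda_j$, and suppose every Jordan block has dimension at most $m_{\max}$. Let $\kappa=\min\|P\|\,\|P^{-1}\|$ over all such Jordan decompositions and let $K\geq\kappa$. For $\mu\in\mathbb{C}$ with $|\mu|\leq1$, let $C(\mu)=\sigma_{\min}(A-\mu I)$. Then $$C(\mu)\;\leq\;\min_{j}|\mu-\lambda_j|\;\leq\;3\,(K\,C(\mu))^{1/m_{\max}}.$$
   Context: $\|\cdot\|$ is the spectral norm; $\sigma_{\min}$ denotes the smallest singular value. *)

theory Defs
  imports "Jordan_Normal_Form.Jordan_Normal_Form" "Jordan_Normal_Form.Schur_Decomposition"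
begin

definition vnorm2 :: "complex vec \<Rightarrow> real" where
  "vnorm2 v = sqrt (\<Sum>i<dim_vec v. (cmod (v $ i))\<^sup>2)"

definition spec_norm :: "complex mat \<Rightarrow> real" where
  "spec_norm B = Sup {vnorm2 (B *\<^sub>v v) | v. v \<in> carrier_vec (dim_col B) \<and> vnorm2 v = 1}"

text \<open>Smallest singular value: square root of the smallest eigenvalue of B^H B
  (these eigenvalues are real and nonnegative).\<close>
definition sigma_min :: "complex mat \<Rightarrow> real" where
  "sigma_min B = sqrt (Min {Re k | k. eigenvalue (mat_adjoint B * B) k})"

text \<open>A Jordan decomposition A = P * J * P^{-1} (Q = P^{-1}) with J the block-diagonal
  matrix of the Jordan blocks listed (size, eigenvalue) in n_as, all of positive size.\<close>
definition jordan_decomp :: "complex mat \<Rightarrow> complex mat \<Rightarrow> complex mat \<Rightarrow> (nat \<times> complex) list \<Rightarrow> bool" where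
  "jordan_decomp A P Q n_as \<longleftrightarrow> (\<forall>(n, a) \<in> set n_as. n > 0) \<and>
      similar_mat_wit A (jordan_matrix n_as) P Q"

definition jordan_kappa :: "complex mat \<Rightarrow> real" where
  "jordan_kappa A = Inf {spec_norm P * spec_norm Q | P Q n_as. jordan_decomp A P Q n_as}"

end

theory Submission
  imports Defs "HOL-Analysis.L2_Norm" "Jordan_Normal_Form.Jordan_Normal_Form_Uniqueness"
    "Jordan_Normal_Form.Spectral_Radius"
begin

text \<open>
  First inequality: a unit eigenvector u of A for the eigenvalue lambda_j nearest to mu satisfies
  ||(A - mu I) u|| = |mu - lambda_j|, and sigma_min B <= ||B u|| for every unit vector u, since
  the smallest eigenvalue of the Hermitian matrix B^H B is at most each of its Rayleigh
  quotients. That Rayleigh bound is obtained without the spectral theorem: the powers of a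
  Hermitian X with spectral radius below 1 stay bounded, whereas
  |<X^(2k) u, u>| >= |<X^k u, u>|^2 would make them grow if |<X u, u>| > 1.

  Second inequality: let delta = min_j |mu - lambda_j|, so delta <= 2 as |lambda_j| <= ||A|| <= 1.
  Back substitution in the shifted Jordan matrix Lambda - mu I, whose diagonal entries have
  modulus at least delta and whose blocks have size at most m, gives
  ||w|| <= (sum_{k<m} delta^(-k-1)) ||(Lambda - mu I) w||, and delta^m times that sum is
  sum_{j<m} delta^j <= 3^m. Writing A - mu I = P (Lambda - mu I) P^(-1) and taking a unit vector
  that attains sigma_min yields (delta/3)^m <= ||P|| ||P^(-1)|| sigma_min (A - mu I) for every
  Jordan decomposition, hence with kappa, and so with K.
\<close>

section \<open>Norms\<close>

lemma vnorm2_eq_L2_set: "vnorm2 v = L2_set (\<lambda>i. cmod (v $ i)) {..<dim_vec v}"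
  by (simp add: vnorm2_def L2_set_def)

lemma vnorm2_nonneg: "vnorm2 v \<ge> 0"
  by (simp add: vnorm2_eq_L2_set)

lemma vnorm2_smult: "vnorm2 (c \<cdot>\<^sub>v v) = cmod c * vnorm2 v"
  by (simp add: vnorm2_def norm_mult power_mult_distrib sum_distrib_left[symmetric] real_sqrt_mult)

lemma vnorm2_eq_0_iff: "vnorm2 v = 0 \<longleftrightarrow> v = 0\<^sub>v (dim_vec v)"
proof -
  have "vnorm2 v = 0 \<longleftrightarrow> (\<forall>i\<in>{..<dim_vec v}. cmod (v $ i) = 0)"
    unfolding vnorm2_eq_L2_set by (rule L2_set_eq_0_iff) simp
  also have "\<dots> \<longleftrightarrow> v = 0\<^sub>v (dim_vec v)" by (auto simp: vec_eq_iff)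
  finally show ?thesis .
qed

lemma vnorm2_pos: "v \<in> carrier_vec n \<Longrightarrow> v \<noteq> 0\<^sub>v n \<Longrightarrow> vnorm2 v > 0"
  using vnorm2_eq_0_iff[of v] vnorm2_nonneg[of v] by force

lemma vnorm2_normalize:
  "v \<in> carrier_vec n \<Longrightarrow> v \<noteq> 0\<^sub>v n \<Longrightarrow> vnorm2 ((1 / of_real (vnorm2 v)) \<cdot>\<^sub>v v) = 1"
  using vnorm2_pos[of v n] by (simp add: vnorm2_smult norm_divide)

lemma norm_index_le_vnorm2: "i < dim_vec v \<Longrightarrow> cmod (v $ i) \<le> vnorm2 v"
  unfolding vnorm2_eq_L2_set by (rule member_le_L2_set) auto

lemma index_mult_mat_vec_sum: "i < dim_row M \<Longrightarrow> dim_vec v = dim_col M \<Longrightarrow>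
   (M *\<^sub>v v) $ i = (\<Sum>j<dim_col M. M $$ (i,j) * v $ j)"
  by (simp add: scalar_prod_def atLeast0LessThan)

lemma vnorm2_mult_mat_vec_le:
  assumes "dim_vec v = dim_col M"
  shows "vnorm2 (M *\<^sub>v v) \<le> (\<Sum>i<dim_row M. \<Sum>j<dim_col M. cmod (M $$ (i,j))) * vnorm2 v"
proof -
  have "vnorm2 (M *\<^sub>v v) \<le> (\<Sum>i<dim_row M. cmod ((M *\<^sub>v v) $ i))"
    unfolding vnorm2_eq_L2_set by (rule order_trans[OF L2_set_le_sum]) auto
  also have "\<dots> \<le> (\<Sum>i<dim_row M. (\<Sum>j<dim_col M. cmod (M $$ (i,j))) * vnorm2 v)"
  proof (rule sum_mono)
    fix i assume i: "i \<in> {..<dim_row M}"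
    have "cmod ((M *\<^sub>v v) $ i) = cmod (\<Sum>j<dim_col M. M $$ (i,j) * v $ j)"
      using i assms index_mult_mat_vec_sum[of i M v] by simp
    also have "\<dots> \<le> (\<Sum>j<dim_col M. cmod (M $$ (i,j)) * cmod (v $ j))"
      by (rule order_trans[OF norm_sum]) (simp add: norm_mult)
    also have "\<dots> \<le> (\<Sum>j<dim_col M. cmod (M $$ (i,j)) * vnorm2 v)"
      using assms by (intro sum_mono mult_left_mono norm_index_le_vnorm2) auto
    finally show "cmod ((M *\<^sub>v v) $ i) \<le> (\<Sum>j<dim_col M. cmod (M $$ (i,j))) * vnorm2 v"
      by (simp add: sum_distrib_right)
  qed
  finally show ?thesis by (simp add: sum_distrib_right)
qed

lemma smult_mat_mult_mat_vec:
  fixes A :: "'a :: comm_ring mat"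
  assumes "A \<in> carrier_mat n m" "v \<in> carrier_vec m"
  shows "(a \<cdot>\<^sub>m A) *\<^sub>v v = a \<cdot>\<^sub>v (A *\<^sub>v v)"
  using assms
  by (intro eq_vecI)
    (auto simp: index_mult_mat_vec_sum sum_distrib_left ac_simps simp del: index_mult_mat_vec)

lemma shift_mult_mat_vec:
  fixes A :: "'a :: comm_ring_1 mat"
  assumes "A \<in> carrier_mat n n" "v \<in> carrier_vec n"
  shows "(A - a \<cdot>\<^sub>m 1\<^sub>m n) *\<^sub>v v = A *\<^sub>v v - a \<cdot>\<^sub>v v"
proof -
  have "(A - a \<cdot>\<^sub>m 1\<^sub>m n) *\<^sub>v v = A *\<^sub>v v - (a \<cdot>\<^sub>m 1\<^sub>m n) *\<^sub>v v"
    using assms by (intro minus_mult_distrib_mat_vec[of _ n n]) auto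
  then show ?thesis
    using assms smult_mat_mult_mat_vec[of "1\<^sub>m n" n n v a] by simp
qed

lemma unit_eigenvector:
  assumes "A \<in> carrier_mat n n" and "eigenvalue A k"
  obtains u where "u \<in> carrier_vec n" "vnorm2 u = 1" "A *\<^sub>v u = k \<cdot>\<^sub>v u"
proof -
  from assms obtain v where v: "v \<in> carrier_vec n" "v \<noteq> 0\<^sub>v n" "A *\<^sub>v v = k \<cdot>\<^sub>v v"
    unfolding eigenvalue_def eigenvector_def by auto
  define u where "u = (1 / of_real (vnorm2 v)) \<cdot>\<^sub>v v"
  have "A *\<^sub>v u = k \<cdot>\<^sub>v u"
    using v assms(1) by (auto simp: u_def mult_mat_vec smult_smult_assoc mult.commute)
  with v vnorm2_normalize[OF v(1,2)] show thesis
    by (intro that[of u]) (auto simp: u_def)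
qed

lemma bdd_above_spec_norm:
  "bdd_above {vnorm2 (B *\<^sub>v v) | v. v \<in> carrier_vec (dim_col B) \<and> vnorm2 v = 1}"
  using vnorm2_mult_mat_vec_le[of _ B]
  by (intro bdd_aboveI[where M = "\<Sum>i<dim_row B. \<Sum>j<dim_col B. cmod (B $$ (i,j))"])
    (auto, metis carrier_vecD mult.right_neutral)

lemma spec_norm_mult_vec_le:
  assumes v: "v \<in> carrier_vec (dim_col B)"
  shows "vnorm2 (B *\<^sub>v v) \<le> spec_norm B * vnorm2 v"
proof (cases "v = 0\<^sub>v (dim_col B)")
  case True
  then show ?thesis by (simp add: vnorm2_def)
next
  case False
  define c :: complex where "c = 1 / of_real (vnorm2 v)"
  have "vnorm2 (B *\<^sub>v (c \<cdot>\<^sub>v v)) \<le> spec_norm B"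
    unfolding spec_norm_def c_def using v vnorm2_normalize[OF v False]
    by (intro cSup_upper[OF _ bdd_above_spec_norm]) auto
  moreover have "B *\<^sub>v (c \<cdot>\<^sub>v v) = c \<cdot>\<^sub>v (B *\<^sub>v v)"
    using v by (intro mult_mat_vec) auto
  ultimately show ?thesis
    using vnorm2_pos[OF v False]
    by (simp add: c_def vnorm2_smult norm_divide divide_le_eq mult.commute)
qed

lemma spec_norm_nonneg:
  assumes "0 < dim_col B"
  shows "0 \<le> spec_norm B"
proof -
  let ?e = "unit_vec (dim_col B) 0 :: complex vec"
  have "?e \<noteq> 0\<^sub>v (dim_col B)"
    using assms by (auto simp: vec_eq_iff)
  then have "0 < vnorm2 ?e"
    by (intro vnorm2_pos) auto
  moreover have "0 \<le> spec_norm B * vnorm2 ?e"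
    using spec_norm_mult_vec_le[of ?e B] vnorm2_nonneg[of "B *\<^sub>v ?e"] by simp
  ultimately show ?thesis
    by (simp add: zero_le_mult_iff)
qed

lemma norm_eigenvalue_le_spec_norm:
  assumes A: "A \<in> carrier_mat n n" and "eigenvalue A k"
  shows "cmod k \<le> spec_norm A"
proof -
  obtain u where u: "u \<in> carrier_vec n" "vnorm2 u = 1" "A *\<^sub>v u = k \<cdot>\<^sub>v u"
    using unit_eigenvector[OF assms] .
  show ?thesis
    using spec_norm_mult_vec_le[of u A] u A by (simp add: vnorm2_smult)
qed

section \<open>Hermitian matrices\<close>

lemma cscalar_prod_eq_sum: "v \<bullet>c w = (\<Sum>i<dim_vec w. v $ i * cnj (w $ i))"
  by (simp add: scalar_prod_def atLeast0LessThan)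

lemma cscalar_prod_self: "v \<bullet>c v = of_real ((vnorm2 v)\<^sup>2)"
proof -
  have "v \<bullet>c v = (\<Sum>i<dim_vec v. of_real ((cmod (v $ i))\<^sup>2))"
    unfolding cscalar_prod_eq_sum complex_norm_square ..
  also have "\<dots> = of_real ((vnorm2 v)\<^sup>2)"
    by (simp add: vnorm2_def sum_nonneg)
  finally show ?thesis .
qed

lemma cscalar_prod_commute: "dim_vec v = dim_vec w \<Longrightarrow> v \<bullet>c w = cnj (w \<bullet>c v)"
  by (simp add: cscalar_prod_eq_sum cnj_sum mult.commute)

lemma norm_cscalar_prod_le:
  assumes "dim_vec v = dim_vec w"
  shows "cmod (v \<bullet>c w) \<le> vnorm2 v * vnorm2 w"
proof -
  have "cmod (v \<bullet>c w) \<le> (\<Sum>i<dim_vec v. \<bar>cmod (v $ i)\<bar> * \<bar>cmod (w $ i)\<bar>)"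
    unfolding cscalar_prod_eq_sum using assms
    by (auto intro: order_trans[OF norm_sum] simp: norm_mult)
  also have "\<dots> \<le> vnorm2 v * vnorm2 w"
    using L2_set_mult_ineq[of "\<lambda>i. cmod (v $ i)" "\<lambda>i. cmod (w $ i)" "{..<dim_vec v}"] assms
    by (simp add: vnorm2_eq_L2_set)
  finally show ?thesis .
qed

lemma mat_adjoint_carrier: "B \<in> carrier_mat m n \<Longrightarrow> mat_adjoint B \<in> carrier_mat n m"
  unfolding mat_adjoint_def by (auto simp: mat_of_rows_def)

lemma index_mat_adjoint:
  "B \<in> carrier_mat m n \<Longrightarrow> i < n \<Longrightarrow> j < m \<Longrightarrow> mat_adjoint B $$ (i,j) = cnj (B $$ (j,i))"
  unfolding mat_adjoint_def by (auto simp: mat_of_rows_def)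

lemma cscalar_prod_mat_adjoint:
  fixes B :: "complex mat"
  assumes B: "B \<in> carrier_mat m n" and v: "v \<in> carrier_vec n" and w: "w \<in> carrier_vec m"
  shows "(B *\<^sub>v v) \<bullet>c w = v \<bullet>c (mat_adjoint B *\<^sub>v w)"
proof -
  have "(B *\<^sub>v v) \<bullet>c w = (\<Sum>i<m. (\<Sum>j<n. B $$ (i,j) * v $ j) * cnj (w $ i))"
    unfolding scalar_prod_def[of "B *\<^sub>v v"] using B v w
    by (intro sum.cong)
      (auto simp: index_mult_mat_vec_sum atLeast0LessThan simp del: index_mult_mat_vec)
  also have "\<dots> = (\<Sum>i<m. \<Sum>j<n. v $ j * (B $$ (i,j) * cnj (w $ i)))"
    unfolding sum_distrib_right by (intro sum.cong refl) (simp add: ac_simps)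
  also have "\<dots> = (\<Sum>j<n. \<Sum>i<m. v $ j * (B $$ (i,j) * cnj (w $ i)))"
    by (rule sum.swap)
  also have "\<dots> = (\<Sum>j<n. v $ j * cnj (\<Sum>i<m. cnj (B $$ (i,j)) * w $ i))"
    by (simp add: sum_distrib_left cnj_sum)
  also have "\<dots> = v \<bullet>c (mat_adjoint B *\<^sub>v w)"
    unfolding scalar_prod_def[of v] using B v w mat_adjoint_carrier[OF B]
    by (intro sum.cong)
      (auto simp: index_mult_mat_vec_sum atLeast0LessThan index_mat_adjoint simp del: index_mult_mat_vec)
  finally show ?thesis .
qed

lemma pow_mat_add:
  assumes X: "X \<in> carrier_mat n n"
  shows "X ^\<^sub>m (i + j) = X ^\<^sub>m i * X ^\<^sub>m j"
proof (induction j)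
  case 0
  show ?case using X by simp
next
  case (Suc j)
  have "X ^\<^sub>m (i + Suc j) = (X ^\<^sub>m i * X ^\<^sub>m j) * X"
    using Suc by simp
  also have "\<dots> = X ^\<^sub>m i * (X ^\<^sub>m j * X)"
    using X by (intro assoc_mult_mat[of _ n n _ n _ n]) auto
  finally show ?case by simp
qed

lemma hermitian_pow_cscalar_prod:
  fixes X :: "complex mat"
  assumes X: "X \<in> carrier_mat n n" and herm: "mat_adjoint X = X"
    and a: "a \<in> carrier_vec n" and b: "b \<in> carrier_vec n"
  shows "(X ^\<^sub>m k *\<^sub>v a) \<bullet>c b = a \<bullet>c (X ^\<^sub>m k *\<^sub>v b)"
  using a
proof (induction k arbitrary: a)
  case 0
  then show ?case using X b by simp
next
  case (Suc k)
  have Xa: "X *\<^sub>v a \<in> carrier_vec n"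
    using X Suc.prems by auto
  have Xkb: "X ^\<^sub>m k *\<^sub>v b \<in> carrier_vec n"
    using X b by (metis mult_mat_vec_carrier pow_carrier_mat)
  have "(X ^\<^sub>m Suc k *\<^sub>v a) \<bullet>c b = (X ^\<^sub>m k *\<^sub>v (X *\<^sub>v a)) \<bullet>c b"
    using X Suc.prems by (simp add: assoc_mult_mat_vec[of _ n n X n])
  also have "\<dots> = (X *\<^sub>v a) \<bullet>c (X ^\<^sub>m k *\<^sub>v b)"
    using Suc.IH[OF Xa] .
  also have "\<dots> = a \<bullet>c (X *\<^sub>v (X ^\<^sub>m k *\<^sub>v b))"
    using cscalar_prod_mat_adjoint[OF X Suc.prems Xkb] herm by simp
  also have "X *\<^sub>v (X ^\<^sub>m k *\<^sub>v b) = X ^\<^sub>m Suc k *\<^sub>v b"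
    using X b pow_mat_add[OF X, of 1 k] by (simp add: assoc_mult_mat_vec[of _ n n _ n])
  finally show ?case .
qed

lemma hermitian_form_pow_square:
  fixes X :: "complex mat"
  assumes X: "X \<in> carrier_mat n n" and herm: "mat_adjoint X = X"
    and u: "u \<in> carrier_vec n" "vnorm2 u = 1"
  shows "(cmod ((X ^\<^sub>m k *\<^sub>v u) \<bullet>c u))\<^sup>2 \<le> cmod ((X ^\<^sub>m (k + k) *\<^sub>v u) \<bullet>c u)"
proof -
  have Xku: "X ^\<^sub>m k *\<^sub>v u \<in> carrier_vec n"
    using X u by (metis mult_mat_vec_carrier pow_carrier_mat)
  have "(X ^\<^sub>m (k + k) *\<^sub>v u) \<bullet>c u = (X ^\<^sub>m k *\<^sub>v u) \<bullet>c (X ^\<^sub>m k *\<^sub>v u)"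
    using X u pow_mat_add[OF X, of k k] hermitian_pow_cscalar_prod[OF X herm Xku u(1), of k]
    by (simp add: assoc_mult_mat_vec[of _ n n _ n])
  then have "cmod ((X ^\<^sub>m (k + k) *\<^sub>v u) \<bullet>c u) = (vnorm2 (X ^\<^sub>m k *\<^sub>v u))\<^sup>2"
    by (simp add: cscalar_prod_self norm_power)
  moreover have "cmod ((X ^\<^sub>m k *\<^sub>v u) \<bullet>c u) \<le> vnorm2 (X ^\<^sub>m k *\<^sub>v u)"
    using norm_cscalar_prod_le[of "X ^\<^sub>m k *\<^sub>v u" u] X u by simp
  ultimately show ?thesis
    by (simp add: power_mono)
qed

lemma hermitian_form_pow_two_pow:
  fixes X :: "complex mat"
  assumes X: "X \<in> carrier_mat n n" and herm: "mat_adjoint X = X"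
    and u: "u \<in> carrier_vec n" "vnorm2 u = 1"
  shows "cmod ((X *\<^sub>v u) \<bullet>c u) ^ (2 ^ j) \<le> cmod ((X ^\<^sub>m (2 ^ j) *\<^sub>v u) \<bullet>c u)"
proof (induction j)
  case 0
  show ?case using X by simp
next
  case (Suc j)
  have "cmod ((X *\<^sub>v u) \<bullet>c u) ^ 2 ^ Suc j = (cmod ((X *\<^sub>v u) \<bullet>c u) ^ 2 ^ j)\<^sup>2"
    by (simp add: power_mult[symmetric] mult.commute)
  also have "\<dots> \<le> (cmod ((X ^\<^sub>m (2 ^ j) *\<^sub>v u) \<bullet>c u))\<^sup>2"
    using Suc by (intro power_mono) auto
  also have "\<dots> \<le> cmod ((X ^\<^sub>m (2 ^ Suc j) *\<^sub>v u) \<bullet>c u)"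
    using hermitian_form_pow_square[OF X herm u, of "2 ^ j"] by (simp add: mult_2)
  finally show ?case .
qed

lemma norm_form_le_norm_bound:
  fixes B :: "complex mat"
  assumes B: "B \<in> carrier_mat n n" and M: "norm_bound B M"
    and u: "u \<in> carrier_vec n" "vnorm2 u = 1"
  shows "cmod ((B *\<^sub>v u) \<bullet>c u) \<le> real n * real n * M"
proof -
  have "cmod ((B *\<^sub>v u) \<bullet>c u) \<le> vnorm2 (B *\<^sub>v u)"
    using norm_cscalar_prod_le[of "B *\<^sub>v u" u] B u by simp
  also have "\<dots> \<le> (\<Sum>i<n. \<Sum>j<n. cmod (B $$ (i,j)))"
    using vnorm2_mult_mat_vec_le[of u B] B u by simp
  also have "\<dots> \<le> (\<Sum>i<n. \<Sum>j<n. M)"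
    using M B unfolding norm_bound_def by (intro sum_mono) auto
  finally show ?thesis
    by simp
qed

lemma hermitian_form_le_1:
  fixes X :: "complex mat"
  assumes X: "X \<in> carrier_mat n n" and herm: "mat_adjoint X = X"
    and sr: "spectral_radius X < 1"
    and u: "u \<in> carrier_vec n" "vnorm2 u = 1"
  shows "cmod ((X *\<^sub>v u) \<bullet>c u) \<le> 1"
proof (rule ccontr)
  let ?q = "cmod ((X *\<^sub>v u) \<bullet>c u)"
  assume "\<not> ?q \<le> 1"
  then have q: "1 < ?q"
    by simp
  obtain M where M: "\<And>k. norm_bound (X ^\<^sub>m k) M"
    using spectral_radius_jnf_norm_bound_less_1_upper_triangular[OF X sr] by blast
  obtain j where "real n * real n * M < ?q ^ j"
    using real_arch_pow[OF q] by blast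
  also have "\<dots> \<le> ?q ^ (2 ^ j)"
    using q less_exp[of j] by (intro power_increasing) auto
  also have "\<dots> \<le> cmod ((X ^\<^sub>m (2 ^ j) *\<^sub>v u) \<bullet>c u)"
    by (rule hermitian_form_pow_two_pow[OF X herm u])
  also have "\<dots> \<le> real n * real n * M"
    using X by (intro norm_form_le_norm_bound[OF _ M u]) simp
  finally show False
    by simp
qed

lemma hermitian_eigenvalue_real:
  fixes X :: "complex mat"
  assumes X: "X \<in> carrier_mat n n" and herm: "mat_adjoint X = X" and k: "eigenvalue X k"
  shows "of_real (Re k) = k"
proof -
  obtain u where u: "u \<in> carrier_vec n" "vnorm2 u = 1" "X *\<^sub>v u = k \<cdot>\<^sub>v u"
    using unit_eigenvector[OF X k] .
  have "k = (X *\<^sub>v u) \<bullet>c u"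
    using u by (simp add: cscalar_prod_self)
  also have "\<dots> = u \<bullet>c (X *\<^sub>v u)"
    using cscalar_prod_mat_adjoint[OF X u(1) u(1)] herm by simp
  also have "\<dots> = cnj k"
    using u cscalar_prod_commute[of u "k \<cdot>\<^sub>v u"] by (simp add: cscalar_prod_self)
  finally have "Im k = Im (cnj k)"
    by (rule arg_cong)
  then show ?thesis
    by (simp add: complex_eq_iff)
qed

lemma affine_mat_mult_vec:
  fixes H :: "complex mat"
  assumes H: "H \<in> carrier_mat n n" and v: "v \<in> carrier_vec n"
  shows "(a \<cdot>\<^sub>m H + b \<cdot>\<^sub>m 1\<^sub>m n) *\<^sub>v v = a \<cdot>\<^sub>v (H *\<^sub>v v) + b \<cdot>\<^sub>v v"
  using assms smult_mat_mult_mat_vec[OF H v, of a] smult_mat_mult_mat_vec[of "1\<^sub>m n" n n v b]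
  by (simp add: add_mult_distrib_mat_vec[of _ n n])

lemma affine_mat_hermitian:
  fixes H :: "complex mat"
  assumes H: "H \<in> carrier_mat n n" and herm: "mat_adjoint H = H" and "a \<in> \<real>" "b \<in> \<real>"
  shows "mat_adjoint (a \<cdot>\<^sub>m H + b \<cdot>\<^sub>m 1\<^sub>m n) = a \<cdot>\<^sub>m H + b \<cdot>\<^sub>m 1\<^sub>m n"
proof (rule eq_matI)
  have X: "a \<cdot>\<^sub>m H + b \<cdot>\<^sub>m 1\<^sub>m n \<in> carrier_mat n n"
    using H by auto
  then show "dim_row (mat_adjoint (a \<cdot>\<^sub>m H + b \<cdot>\<^sub>m 1\<^sub>m n)) = dim_row (a \<cdot>\<^sub>m H + b \<cdot>\<^sub>m 1\<^sub>m n)"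
    "dim_col (mat_adjoint (a \<cdot>\<^sub>m H + b \<cdot>\<^sub>m 1\<^sub>m n)) = dim_col (a \<cdot>\<^sub>m H + b \<cdot>\<^sub>m 1\<^sub>m n)"
    using mat_adjoint_carrier[OF X] by auto
  fix i j assume "i < dim_row (a \<cdot>\<^sub>m H + b \<cdot>\<^sub>m 1\<^sub>m n)" "j < dim_col (a \<cdot>\<^sub>m H + b \<cdot>\<^sub>m 1\<^sub>m n)"
  then have ij: "i < n" "j < n"
    using X by auto
  have "H $$ (i, j) = cnj (H $$ (j, i))"
    using index_mat_adjoint[OF H ij] herm by simp
  then show "mat_adjoint (a \<cdot>\<^sub>m H + b \<cdot>\<^sub>m 1\<^sub>m n) $$ (i, j) = (a \<cdot>\<^sub>m H + b \<cdot>\<^sub>m 1\<^sub>m n) $$ (i, j)"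
    using index_mat_adjoint[OF X ij] ij H assms(3,4) by (auto simp: Reals_cnj_iff)
qed

lemma affine_mat_eigenvalue:
  fixes H :: "complex mat"
  assumes H: "H \<in> carrier_mat n n" and a: "a \<noteq> 0" and e: "eigenvalue (a \<cdot>\<^sub>m H + b \<cdot>\<^sub>m 1\<^sub>m n) e"
  shows "eigenvalue H ((e - b) / a)"
proof -
  obtain w where w: "w \<in> carrier_vec n" "w \<noteq> 0\<^sub>v n" "(a \<cdot>\<^sub>m H + b \<cdot>\<^sub>m 1\<^sub>m n) *\<^sub>v w = e \<cdot>\<^sub>v w"
    using e H unfolding eigenvalue_def eigenvector_def by auto
  have "H *\<^sub>v w = ((e - b) / a) \<cdot>\<^sub>v w"
  proof (rule eq_vecI)
    fix i assume "i < dim_vec (((e - b) / a) \<cdot>\<^sub>v w)"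
    then have i: "i < n"
      using w by simp
    have "a * (H *\<^sub>v w) $ i + b * w $ i = e * w $ i"
      using arg_cong[OF w(3), of "\<lambda>x. x $ i"] affine_mat_mult_vec[OF H w(1)] H w(1) i by simp
    then show "(H *\<^sub>v w) $ i = (((e - b) / a) \<cdot>\<^sub>v w) $ i"
      using i w a by (simp add: field_simps)
  qed (use H w in auto)
  then show ?thesis
    using H w(1,2) by (auto simp: eigenvalue_def eigenvector_def)
qed

lemma spectral_radius_affine_mat_lt_1:
  fixes H :: "complex mat" and t r :: real
  assumes H: "H \<in> carrier_mat n n" and herm: "mat_adjoint H = H" and n: "0 < n" and r: "0 < r"
    and spectrum: "\<And>k. eigenvalue H k \<Longrightarrow> \<bar>Re k - t\<bar> < r"
  shows "spectral_radius ((- 1 / r) \<cdot>\<^sub>m H + (t / r) \<cdot>\<^sub>m 1\<^sub>m n) < 1"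
proof -
  let ?X = "(- 1 / r) \<cdot>\<^sub>m H + (t / r) \<cdot>\<^sub>m 1\<^sub>m n"
  have X: "?X \<in> carrier_mat n n"
    using H by auto
  obtain e where e: "eigenvalue ?X e" and sr: "spectral_radius ?X = cmod e"
    using spectral_radius_mem_max(1)[OF X n] by (auto simp: spectrum_def)
  have "(e - t / r) / (- 1 / r) = t - r * e"
    using r by (simp add: field_simps)
  then have "eigenvalue H (t - r * e)"
    using affine_mat_eigenvalue[OF H _ e] r by simp
  then have k: "r * \<bar>Re e\<bar> < r" "of_real (t - r * Re e) = t - r * e"
    using spectrum[of "t - r * e"] hermitian_eigenvalue_real[OF H herm, of "t - r * e"] r
    by (simp_all add: abs_mult)
  have "Im e = 0"
    using arg_cong[OF k(2), of Im] r by simp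
  then show ?thesis
    using sr r k(1) by (simp add: cmod_eq_Re)
qed

lemma min_eigenvalue_le_hermitian_form:
  fixes H :: "complex mat"
  assumes H: "H \<in> carrier_mat n n" and herm: "mat_adjoint H = H" and n: "0 < n"
    and u: "u \<in> carrier_vec n" "vnorm2 u = 1"
  shows "Min (Re ` spectrum H) \<le> Re ((H *\<^sub>v u) \<bullet>c u)"
proof (rule ccontr)
  define kmin where "kmin = Min (Re ` spectrum H)"
  define kmax where "kmax = Max (Re ` spectrum H)"
  define c where "c = Re ((H *\<^sub>v u) \<bullet>c u)"
  assume "\<not> ?thesis"
  then have c_lt: "c < kmin"
    by (simp add: kmin_def c_def)
  have fin: "finite (Re ` spectrum H)"
    using card_finite_spectrum(1)[OF H] by simp
  \<comment> \<open>X = (t I - H) / r has its spectrum in the open unit disc, but a quadratic form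
    exceeding 1 at u.\<close>
  define t where "t = kmax + 1"
  define r where "r = t - (c + kmin) / 2"
  define X where "X = (- 1 / r) \<cdot>\<^sub>m H + (t / r) \<cdot>\<^sub>m 1\<^sub>m n"
  have spectrum: "\<bar>Re k - t\<bar> < r" if "eigenvalue H k" for k
  proof -
    have "kmin \<le> Re k" "Re k \<le> kmax"
      using fin that by (auto simp: kmin_def kmax_def spectrum_def)
    then show ?thesis
      using c_lt by (simp add: r_def t_def)
  qed
  have r: "0 < r"
    using spectrum_non_empty[OF H n] spectrum by (force simp: spectrum_def)
  have X: "X \<in> carrier_mat n n"
    using H by (auto simp: X_def)
  have X_herm: "mat_adjoint X = X"
    unfolding X_def using H herm by (intro affine_mat_hermitian) auto
  have "(X *\<^sub>v u) \<bullet>c u = (- 1 / r) * ((H *\<^sub>v u) \<bullet>c u) + t / r * (u \<bullet>c u)"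
    unfolding X_def using affine_mat_mult_vec[OF H u(1)] H u(1)
    by (simp add: add_scalar_prod_distrib[of _ n])
  then have "Re ((X *\<^sub>v u) \<bullet>c u) = (t - c) / r"
    using u by (simp add: cscalar_prod_self c_def diff_divide_distrib)
  also have "\<dots> > 1"
    using c_lt r by (simp add: r_def)
  finally have "1 < cmod ((X *\<^sub>v u) \<bullet>c u)"
    using complex_Re_le_cmod[of "(X *\<^sub>v u) \<bullet>c u"] by linarith
  moreover have "spectral_radius X < 1"
    unfolding X_def using spectral_radius_affine_mat_lt_1[OF H herm n r spectrum] .
  ultimately show False
    using hermitian_form_le_1[OF X X_herm _ u] by fastforce
qed

section \<open>Smallest singular value\<close>

lemma adjoint_mult_self_form:
  fixes B :: "complex mat"
  assumes B: "B \<in> carrier_mat m n" and u: "u \<in> carrier_vec n"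
  shows "((mat_adjoint B * B) *\<^sub>v u) \<bullet>c u = of_real ((vnorm2 (B *\<^sub>v u))\<^sup>2)"
proof -
  have Bu: "B *\<^sub>v u \<in> carrier_vec m"
    using B u by simp
  have "((mat_adjoint B * B) *\<^sub>v u) \<bullet>c u = (mat_adjoint B *\<^sub>v (B *\<^sub>v u)) \<bullet>c u"
    using B u mat_adjoint_carrier[OF B] by (simp add: assoc_mult_mat_vec[of _ n m _ n])
  also have "\<dots> = cnj (u \<bullet>c (mat_adjoint B *\<^sub>v (B *\<^sub>v u)))"
    using cscalar_prod_commute[of "mat_adjoint B *\<^sub>v (B *\<^sub>v u)" u] B u mat_adjoint_carrier[OF B]
    by simp
  also have "\<dots> = cnj ((B *\<^sub>v u) \<bullet>c (B *\<^sub>v u))"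
    using cscalar_prod_mat_adjoint[OF B u Bu] by simp
  finally show ?thesis
    by (simp add: cscalar_prod_self)
qed

lemma adjoint_mult_self_hermitian:
  fixes B :: "complex mat"
  assumes B: "B \<in> carrier_mat m n"
  shows "mat_adjoint (mat_adjoint B * B) = mat_adjoint B * B"
proof (rule eq_matI)
  have BB: "mat_adjoint B * B \<in> carrier_mat n n"
    using B mat_adjoint_carrier[OF B] by simp
  then show "dim_row (mat_adjoint (mat_adjoint B * B)) = dim_row (mat_adjoint B * B)"
    "dim_col (mat_adjoint (mat_adjoint B * B)) = dim_col (mat_adjoint B * B)"
    using mat_adjoint_carrier[OF BB] by auto
  fix i j assume "i < dim_row (mat_adjoint B * B)" "j < dim_col (mat_adjoint B * B)"
  then have ij: "i < n" "j < n"
    using BB by auto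
  show "mat_adjoint (mat_adjoint B * B) $$ (i, j) = (mat_adjoint B * B) $$ (i, j)"
    using ij B mat_adjoint_carrier[OF B]
    by (simp add: index_mat_adjoint[OF BB ij] index_mat_adjoint[OF B] scalar_prod_def cnj_sum
        ac_simps)
qed

lemma eigenvalue_adjoint_mult_self:
  fixes B :: "complex mat"
  assumes B: "B \<in> carrier_mat m n" and k: "eigenvalue (mat_adjoint B * B) k"
  obtains v where "v \<in> carrier_vec n" "vnorm2 v = 1" "k = of_real ((vnorm2 (B *\<^sub>v v))\<^sup>2)"
proof -
  have "mat_adjoint B * B \<in> carrier_mat n n"
    using B mat_adjoint_carrier[OF B] by simp
  then obtain v where v: "v \<in> carrier_vec n" "vnorm2 v = 1" "(mat_adjoint B * B) *\<^sub>v v = k \<cdot>\<^sub>v v"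
    using unit_eigenvector[OF _ k] by blast
  have "k = (k \<cdot>\<^sub>v v) \<bullet>c v"
    using v by (simp add: cscalar_prod_self)
  also have "\<dots> = of_real ((vnorm2 (B *\<^sub>v v))\<^sup>2)"
    using adjoint_mult_self_form[OF B v(1)] v(3) by simp
  finally show thesis
    using that v(1,2) by blast
qed

lemma sigma_min_eq_sqrt_Min_spectrum:
  "sigma_min B = sqrt (Min (Re ` spectrum (mat_adjoint B * B)))"
proof -
  have "{Re k | k. eigenvalue (mat_adjoint B * B) k} = Re ` spectrum (mat_adjoint B * B)"
    by (auto simp: spectrum_def)
  then show ?thesis
    by (simp add: sigma_min_def)
qed

lemma sigma_min_le:
  fixes B :: "complex mat"
  assumes B: "B \<in> carrier_mat n n" and n: "0 < n"
    and u: "u \<in> carrier_vec n" "vnorm2 u = 1"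
  shows "sigma_min B \<le> vnorm2 (B *\<^sub>v u)"
proof -
  have BB: "mat_adjoint B * B \<in> carrier_mat n n"
    using B mat_adjoint_carrier[OF B] by simp
  have "Min (Re ` spectrum (mat_adjoint B * B)) \<le> (vnorm2 (B *\<^sub>v u))\<^sup>2"
    using min_eigenvalue_le_hermitian_form[OF BB adjoint_mult_self_hermitian[OF B] n u]
      adjoint_mult_self_form[OF B u(1)] by simp
  then show ?thesis
    using vnorm2_nonneg[of "B *\<^sub>v u"] real_sqrt_le_mono
    by (fastforce simp: sigma_min_eq_sqrt_Min_spectrum)
qed

lemma sigma_min_attained:
  fixes B :: "complex mat"
  assumes B: "B \<in> carrier_mat n n" and n: "0 < n"
  obtains v where "v \<in> carrier_vec n" "vnorm2 v = 1" "sigma_min B = vnorm2 (B *\<^sub>v v)"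
proof -
  have BB: "mat_adjoint B * B \<in> carrier_mat n n"
    using B mat_adjoint_carrier[OF B] by simp
  let ?S = "Re ` spectrum (mat_adjoint B * B)"
  have "Min ?S \<in> ?S"
    using card_finite_spectrum(1)[OF BB] spectrum_non_empty[OF BB n] by (intro Min_in) auto
  then obtain k where "eigenvalue (mat_adjoint B * B) k" "Min ?S = Re k"
    by (auto simp: spectrum_def)
  moreover obtain v where "v \<in> carrier_vec n" "vnorm2 v = 1" "k = of_real ((vnorm2 (B *\<^sub>v v))\<^sup>2)"
    using eigenvalue_adjoint_mult_self[OF B \<open>eigenvalue _ k\<close>] by blast
  ultimately show thesis
    using that vnorm2_nonneg[of "B *\<^sub>v v"] by (simp add: sigma_min_eq_sqrt_Min_spectrum)
qed

lemma sigma_min_nonneg: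
  fixes B :: "complex mat"
  assumes "B \<in> carrier_mat n n" "0 < n"
  shows "0 \<le> sigma_min B"
  using sigma_min_attained[OF assms] vnorm2_nonneg by metis

lemma sigma_min_shift_le_dist_eigenvalue:
  fixes A :: "complex mat"
  assumes A: "A \<in> carrier_mat n n" and n: "0 < n" and a: "eigenvalue A a"
  shows "sigma_min (A - \<mu> \<cdot>\<^sub>m 1\<^sub>m n) \<le> cmod (\<mu> - a)"
proof -
  obtain u where u: "u \<in> carrier_vec n" "vnorm2 u = 1" "A *\<^sub>v u = a \<cdot>\<^sub>v u"
    using unit_eigenvector[OF A a] .
  have "(A - \<mu> \<cdot>\<^sub>m 1\<^sub>m n) *\<^sub>v u = a \<cdot>\<^sub>v u - \<mu> \<cdot>\<^sub>v u"
    using A u by (simp add: shift_mult_mat_vec)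
  also have "\<dots> = (a - \<mu>) \<cdot>\<^sub>v u"
    by (intro eq_vecI) (auto simp: algebra_simps)
  finally have "vnorm2 ((A - \<mu> \<cdot>\<^sub>m 1\<^sub>m n) *\<^sub>v u) = cmod (\<mu> - a)"
    using u by (simp add: vnorm2_smult norm_minus_commute)
  moreover have "A - \<mu> \<cdot>\<^sub>m 1\<^sub>m n \<in> carrier_mat n n"
    using A by auto
  ultimately show ?thesis
    using sigma_min_le[of "A - \<mu> \<cdot>\<^sub>m 1\<^sub>m n" n u] n u by simp
qed

section \<open>Shifted Jordan matrices\<close>

fun jordan_diag :: "(nat \<times> complex) list \<Rightarrow> nat \<Rightarrow> complex" where
  "jordan_diag [] i = 0"
| "jordan_diag ((n, a) # ns) i = (if i < n then a else jordan_diag ns (i - n))"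

text \<open>The number of indices after i in the Jordan block containing i, i.e. of the
  superdiagonal ones following row i.\<close>

fun jordan_tail :: "(nat \<times> complex) list \<Rightarrow> nat \<Rightarrow> nat" where
  "jordan_tail [] i = 0"
| "jordan_tail ((n, a) # ns) i = (if i < n then n - 1 - i else jordan_tail ns (i - n))"

lemma index_jordan_matrix_Cons:
  assumes "i < n + sum_list (map fst ns)" "j < n + sum_list (map fst ns)"
  shows "jordan_matrix ((n, a) # ns) $$ (i, j) =
    (if i < n then if j < n then jordan_block n a $$ (i, j) else 0
     else if j < n then 0 else jordan_matrix ns $$ (i - n, j - n))"
proof -
  have "jordan_matrix ((n, a) # ns) = four_block_mat (jordan_block n a)
      (0\<^sub>m n (sum_list (map fst ns))) (0\<^sub>m (sum_list (map fst ns)) n) (jordan_matrix ns)"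
    using jordan_matrix_dim[of ns] unfolding jordan_matrix_def by (simp add: Let_def)
  then show ?thesis
    using assms by (simp add: index_mat_four_block)
qed

lemma index_jordan_matrix:
  assumes "i < sum_list (map fst ns)" "j < sum_list (map fst ns)"
  shows "jordan_matrix ns $$ (i, j) =
    (if i = j then jordan_diag ns i else if j = Suc i \<and> 0 < jordan_tail ns i then 1 else 0)"
  using assms
proof (induction ns arbitrary: i j)
  case Nil
  then show ?case by simp
next
  case (Cons na ns)
  obtain n a where na: "na = (n, a)"
    by fastforce
  have ij: "i < n + sum_list (map fst ns)" "j < n + sum_list (map fst ns)"
    using Cons.prems na by auto
  show ?case
  proof (cases "i < n \<or> j < n")
    case True
    then show ?thesis
      unfolding na index_jordan_matrix_Cons[OF ij] by auto
  next
    case False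
    have "jordan_matrix ns $$ (i - n, j - n) = (if i - n = j - n then jordan_diag ns (i - n)
        else if j - n = Suc (i - n) \<and> 0 < jordan_tail ns (i - n) then 1 else 0)"
      using ij False by (intro Cons.IH) auto
    moreover have "i - n = j - n \<longleftrightarrow> i = j" "j - n = Suc (i - n) \<longleftrightarrow> j = Suc i"
      using False by auto
    ultimately show ?thesis
      unfolding na index_jordan_matrix_Cons[OF ij] using False by simp
  qed
qed

lemma jordan_diag_mem:
  "i < sum_list (map fst ns) \<Longrightarrow> \<exists>n. (n, jordan_diag ns i) \<in> set ns"
proof (induction ns arbitrary: i)
  case (Cons na ns)
  obtain n a where na: "na = (n, a)"
    by fastforce
  show ?case
  proof (cases "i < n")
    case False
    then have "i - n < sum_list (map fst ns)"
      using Cons.prems na by auto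
    then show ?thesis
      using Cons.IH[of "i - n"] False na by fastforce
  qed (auto simp: na)
qed simp

lemma jordan_tail_lt:
  "i < sum_list (map fst ns) \<Longrightarrow> \<exists>n a. (n, a) \<in> set ns \<and> jordan_tail ns i < n"
proof (induction ns arbitrary: i)
  case (Cons na ns)
  obtain n a where na: "na = (n, a)"
    by fastforce
  show ?case
  proof (cases "i < n")
    case False
    then have "i - n < sum_list (map fst ns)"
      using Cons.prems na by auto
    then show ?thesis
      using Cons.IH[of "i - n"] False na by fastforce
  qed (auto simp: na)
qed simp

lemma jordan_tail_Suc:
  "i < sum_list (map fst ns) \<Longrightarrow> 0 < jordan_tail ns i \<Longrightarrow>
    Suc i < sum_list (map fst ns) \<and> jordan_tail ns (Suc i) = jordan_tail ns i - 1"
proof (induction ns arbitrary: i)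
  case (Cons na ns)
  obtain n a where na: "na = (n, a)"
    by fastforce
  show ?case
  proof (cases "i < n")
    case False
    then have "i - n < sum_list (map fst ns)" "Suc i - n = Suc (i - n)"
      using Cons.prems na by auto
    then show ?thesis
      using Cons.prems Cons.IH[of "i - n"] False unfolding na by auto
  qed (use Cons.prems na in auto)
qed simp

lemma index_shifted_jordan_mult_vec:
  fixes ns :: "(nat \<times> complex) list" and \<mu> :: complex
  defines "N \<equiv> sum_list (map fst ns)"
  assumes w: "w \<in> carrier_vec N" and i: "i < N"
  shows "((jordan_matrix ns - \<mu> \<cdot>\<^sub>m 1\<^sub>m N) *\<^sub>v w) $ i =
    (jordan_diag ns i - \<mu>) * w $ i + (if 0 < jordan_tail ns i then w $ Suc i else 0)"
proof -
  have "((jordan_matrix ns - \<mu> \<cdot>\<^sub>m 1\<^sub>m N) *\<^sub>v w) $ i =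
      (\<Sum>j<N. (jordan_matrix ns - \<mu> \<cdot>\<^sub>m 1\<^sub>m N) $$ (i, j) * w $ j)"
    using w i by (simp add: index_mult_mat_vec_sum N_def del: index_mult_mat_vec)
  also have "\<dots> = (\<Sum>j<N. (if j = i then (jordan_diag ns i - \<mu>) * w $ j else 0) +
      (if j = Suc i \<and> 0 < jordan_tail ns i then w $ j else 0))"
    using i by (intro sum.cong refl) (auto simp: N_def index_jordan_matrix algebra_simps)
  also have "\<dots> = (jordan_diag ns i - \<mu>) * w $ i + (if 0 < jordan_tail ns i then w $ Suc i else 0)"
    using i jordan_tail_Suc[of i ns] by (auto simp: sum.distrib N_def)
  finally show ?thesis .
qed

lemma shifted_jordan_component_bound:
  fixes ns :: "(nat \<times> complex) list" and \<mu> :: complex and w :: "complex vec" and \<delta> :: real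
  defines "N \<equiv> sum_list (map fst ns)"
  defines "r \<equiv> \<lambda>j. if j < N then cmod (((jordan_matrix ns - \<mu> \<cdot>\<^sub>m 1\<^sub>m N) *\<^sub>v w) $ j) else 0"
  assumes \<delta>: "0 < \<delta>" and gap: "\<And>n a. (n, a) \<in> set ns \<Longrightarrow> \<delta> \<le> cmod (a - \<mu>)"
    and w: "w \<in> carrier_vec N" and i: "i < N"
  shows "cmod (w $ i) \<le> (\<Sum>k\<le>jordan_tail ns i. r (i + k) / \<delta> ^ Suc k)"
  using i
proof (induction "jordan_tail ns i" arbitrary: i)
  case 0
  obtain n where "(n, jordan_diag ns i) \<in> set ns"
    using jordan_diag_mem 0 unfolding N_def by blast
  then have "\<delta> * cmod (w $ i) \<le> cmod (jordan_diag ns i - \<mu>) * cmod (w $ i)"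
    by (intro mult_right_mono gap) auto
  also have "\<dots> = r i"
    using 0 w
    by (simp add: r_def index_shifted_jordan_mult_vec N_def norm_mult del: index_mult_mat_vec)
  finally show ?case
    using 0 \<delta> by (simp add: field_simps)
next
  case (Suc t)
  then have next_i: "Suc i < N" "jordan_tail ns (Suc i) = t"
    using jordan_tail_Suc[of i ns] unfolding N_def by auto
  obtain n where "(n, jordan_diag ns i) \<in> set ns"
    using jordan_diag_mem Suc.prems unfolding N_def by blast
  then have "\<delta> * cmod (w $ i) \<le> cmod ((jordan_diag ns i - \<mu>) * w $ i)"
    by (auto simp: norm_mult intro: mult_right_mono gap)
  also have "\<dots> \<le> r i + cmod (w $ Suc i)"
    using Suc.prems Suc.hyps(2) w
      norm_triangle_ineq4[of "(jordan_diag ns i - \<mu>) * w $ i + w $ Suc i" "w $ Suc i"]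
    by (simp add: r_def index_shifted_jordan_mult_vec N_def del: index_mult_mat_vec
        flip: Suc.hyps(2))
  also have "\<dots> \<le> r i + (\<Sum>k\<le>t. r (Suc i + k) / \<delta> ^ Suc k)"
    using Suc.hyps(1)[of "Suc i"] next_i by simp
  finally have "cmod (w $ i) \<le> (r i + (\<Sum>k\<le>t. r (Suc i + k) / \<delta> ^ Suc k)) / \<delta>"
    using \<delta> by (simp add: pos_le_divide_eq mult.commute)
  also have "\<dots> = r (i + 0) / \<delta> ^ Suc 0 + (\<Sum>k\<le>t. r (i + Suc k) / \<delta> ^ Suc (Suc k))"
    by (simp add: add_divide_distrib sum_divide_distrib mult.commute)
  also have "\<dots> = (\<Sum>k\<le>Suc t. r (i + k) / \<delta> ^ Suc k)"
    by (rule sum.atMost_Suc_shift[symmetric])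
  finally show ?case
    using Suc.hyps(2) by simp
qed

lemma L2_set_sum_le: "finite K \<Longrightarrow> L2_set (\<lambda>i. \<Sum>k\<in>K. f k i) A \<le> (\<Sum>k\<in>K. L2_set (f k) A)"
proof (induction K rule: finite_induct)
  case (insert x K)
  have "L2_set (\<lambda>i. \<Sum>k\<in>insert x K. f k i) A = L2_set (\<lambda>i. f x i + (\<Sum>k\<in>K. f k i)) A"
    using insert by simp
  also have "\<dots> \<le> L2_set (f x) A + L2_set (\<lambda>i. \<Sum>k\<in>K. f k i) A"
    by (rule L2_set_triangle_ineq)
  finally show ?case
    using insert by simp
qed (simp add: L2_set_def)

lemma L2_set_shift_le:
  fixes f :: "nat \<Rightarrow> real"
  assumes "\<And>j. N \<le> j \<Longrightarrow> f j = 0"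
  shows "L2_set (\<lambda>i. f (i + k)) {..<N} \<le> L2_set f {..<N}"
proof -
  have "(\<Sum>i<N. (f (i + k))\<^sup>2) = (\<Sum>j\<in>{k..<N + k}. (f j)\<^sup>2)"
    using sum.shift_bounds_nat_ivl[of "\<lambda>j. (f j)\<^sup>2" 0 k N] by (simp add: atLeast0LessThan)
  also have "\<dots> \<le> (\<Sum>j\<in>{0..<N + k}. (f j)\<^sup>2)"
    by (rule sum_mono2) auto
  also have "\<dots> = (\<Sum>j\<in>{0..<N}. (f j)\<^sup>2)"
    using assms by (subst sum.atLeastLessThan_concat[of 0 N "N + k", symmetric]) auto
  finally show ?thesis
    by (simp add: L2_set_def atLeast0LessThan)
qed

lemma vnorm2_le_shifted_jordan:
  fixes ns :: "(nat \<times> complex) list" and \<mu> :: complex and \<delta> :: real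
  defines "N \<equiv> sum_list (map fst ns)"
  assumes \<delta>: "0 < \<delta>"
    and gap: "\<And>n a. (n, a) \<in> set ns \<Longrightarrow> \<delta> \<le> cmod (a - \<mu>) \<and> n \<le> m"
    and w: "w \<in> carrier_vec N"
  shows "vnorm2 w \<le> (\<Sum>k<m. 1 / \<delta> ^ Suc k) * vnorm2 ((jordan_matrix ns - \<mu> \<cdot>\<^sub>m 1\<^sub>m N) *\<^sub>v w)"
proof -
  define y where "y = (jordan_matrix ns - \<mu> \<cdot>\<^sub>m 1\<^sub>m N) *\<^sub>v w"
  define r where "r j = (if j < N then cmod (y $ j) else 0)" for j
  have w_le: "cmod (w $ i) \<le> (\<Sum>k<m. r (i + k) / \<delta> ^ Suc k)" if i: "i < N" for i
  proof -
    obtain n a where "(n, a) \<in> set ns" "jordan_tail ns i < n"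
      using jordan_tail_lt i unfolding N_def by blast
    then have "jordan_tail ns i < m"
      using gap by fastforce
    then have "(\<Sum>k\<le>jordan_tail ns i. r (i + k) / \<delta> ^ Suc k) \<le> (\<Sum>k<m. r (i + k) / \<delta> ^ Suc k)"
      using \<delta> by (intro sum_mono2) (auto simp: r_def)
    moreover have "cmod (w $ i) \<le> (\<Sum>k\<le>jordan_tail ns i. r (i + k) / \<delta> ^ Suc k)"
      using shifted_jordan_component_bound[of \<delta> ns \<mu> w i] \<delta> gap w i
      unfolding r_def y_def N_def by blast
    ultimately show ?thesis
      by linarith
  qed
  have "vnorm2 w = L2_set (\<lambda>i. cmod (w $ i)) {..<N}"
    using w by (simp add: vnorm2_eq_L2_set)
  also have "\<dots> \<le> L2_set (\<lambda>i. \<Sum>k<m. r (i + k) / \<delta> ^ Suc k) {..<N}"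
    using w_le by (intro L2_set_mono) auto
  also have "\<dots> \<le> (\<Sum>k<m. L2_set (\<lambda>i. r (i + k) / \<delta> ^ Suc k) {..<N})"
    by (rule L2_set_sum_le) simp
  also have "\<dots> = (\<Sum>k<m. 1 / \<delta> ^ Suc k * L2_set (\<lambda>i. r (i + k)) {..<N})"
    using \<delta> by (intro sum.cong refl) (subst L2_set_right_distrib, auto)
  also have "\<dots> \<le> (\<Sum>k<m. 1 / \<delta> ^ Suc k * L2_set r {..<N})"
    using \<delta> by (intro sum_mono mult_left_mono L2_set_shift_le) (auto simp: r_def)
  also have "L2_set r {..<N} = vnorm2 y"
    unfolding vnorm2_eq_L2_set using w by (intro L2_set_cong) (auto simp: r_def y_def N_def)
  finally show ?thesis
    by (simp add: y_def sum_distrib_right)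
qed

section \<open>Jordan decompositions\<close>

lemma jordan_decomp_jordan_nf: "jordan_decomp A P Q ns \<Longrightarrow> jordan_nf A ns"
  unfolding jordan_decomp_def jordan_nf_def similar_mat_def by force

lemma jordan_decomp_size:
  assumes "A \<in> carrier_mat N N" "jordan_decomp A P Q ns"
  shows "sum_list (map fst ns) = N"
  using similar_mat_witD2(5)[OF assms(1)] assms(2) carrier_matD(1)
  unfolding jordan_decomp_def by (metis jordan_matrix_dim(1))

lemma jordan_decomp_eigenvalue:
  assumes A: "A \<in> carrier_mat N N" and d: "jordan_decomp A P Q ns" and mem: "(n, a) \<in> set ns"
  shows "eigenvalue A a"
proof -
  have "char_poly A = (\<Prod>(n, a)\<leftarrow>ns. [:- a, 1:] ^ n)"
    using d jordan_nf_char_poly jordan_decomp_jordan_nf by blast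
  moreover have "poly (\<Prod>(n, a)\<leftarrow>ns. [:- a, 1:] ^ n) a = 0"
    using mem d unfolding jordan_decomp_def poly_prod_list_zero_iff by force
  ultimately show ?thesis
    using eigenvalue_root_char_poly[OF A] by simp
qed

lemma shifted_similar_mat_wit_mult_vec:
  fixes A :: "complex mat"
  assumes sim: "similar_mat_wit A J P Q" and A: "A \<in> carrier_mat N N" and v: "v \<in> carrier_vec N"
  shows "(J - \<mu> \<cdot>\<^sub>m 1\<^sub>m N) *\<^sub>v (Q *\<^sub>v v) = Q *\<^sub>v ((A - \<mu> \<cdot>\<^sub>m 1\<^sub>m N) *\<^sub>v v)"
proof -
  have carr: "J \<in> carrier_mat N N" "P \<in> carrier_mat N N" "Q \<in> carrier_mat N N"
    and QP: "Q * P = 1\<^sub>m N" and AJ: "A = P * J * Q"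
    using similar_mat_witD2[OF A sim] by auto
  have QA: "Q * A = J * Q"
  proof -
    have "Q * A = (Q * P) * J * Q"
      using carr by (simp add: AJ assoc_mult_mat[of _ N N _ N _ N])
    then show ?thesis
      using carr QP by simp
  qed
  have "Q *\<^sub>v ((A - \<mu> \<cdot>\<^sub>m 1\<^sub>m N) *\<^sub>v v) = Q *\<^sub>v (A *\<^sub>v v) - \<mu> \<cdot>\<^sub>v (Q *\<^sub>v v)"
    using A carr v by (simp add: shift_mult_mat_vec mult_minus_distrib_mat_vec mult_mat_vec)
  also have "Q *\<^sub>v (A *\<^sub>v v) = J *\<^sub>v (Q *\<^sub>v v)"
    using A carr v QA by (simp flip: assoc_mult_mat_vec)
  finally show ?thesis
    using carr v by (simp add: shift_mult_mat_vec)
qed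

lemma geometric_sum_le_pow_3:
  fixes d :: real
  assumes "0 \<le> d" "d \<le> 2"
  shows "(\<Sum>j<m. d ^ j) \<le> 3 ^ m"
proof (induction m)
  case (Suc m)
  have "d ^ m \<le> 2 ^ m"
    using assms by (intro power_mono) auto
  also have "\<dots> \<le> 3 ^ m"
    by (intro power_mono) auto
  finally have "(\<Sum>j<Suc m. d ^ j) \<le> 3 ^ m + 3 ^ m"
    using Suc by simp
  also have "\<dots> \<le> 3 ^ Suc m"
    by simp
  finally show ?case .
qed simp

lemma pow_mult_sum_inverse_pow:
  fixes d :: real
  assumes "0 < d"
  shows "d ^ m * (\<Sum>k<m. 1 / d ^ Suc k) = (\<Sum>j<m. d ^ j)"
proof -
  have "d ^ m * (\<Sum>k<m. 1 / d ^ Suc k) = (\<Sum>k<m. d ^ (m - Suc k))"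
    unfolding sum_distrib_left using assms by (intro sum.cong refl) (simp add: power_diff)
  also have "\<dots> = (\<Sum>j<m. d ^ j)"
    by (rule sum.nat_diff_reindex)
  finally show ?thesis .
qed

lemma jordan_decomp_sigma_min_bound:
  fixes A :: "complex mat" and \<mu> :: complex and \<delta> :: real
  assumes A: "A \<in> carrier_mat N N" and N: "0 < N" and dec: "jordan_decomp A P Q ns"
    and \<delta>: "0 < \<delta>"
    and gap: "\<And>n a. (n, a) \<in> set ns \<Longrightarrow> \<delta> \<le> cmod (a - \<mu>) \<and> n \<le> m"
  shows "1 \<le> spec_norm P * ((\<Sum>k<m. 1 / \<delta> ^ Suc k) * (spec_norm Q * sigma_min (A - \<mu> \<cdot>\<^sub>m 1\<^sub>m N)))"
proof -
  define S where "S = (\<Sum>k<m. 1 / \<delta> ^ Suc k)"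
  define J where "J = jordan_matrix ns"
  define B where "B = A - \<mu> \<cdot>\<^sub>m 1\<^sub>m N"
  have sim: "similar_mat_wit A J P Q"
    using dec by (simp add: jordan_decomp_def J_def)
  have carr: "P \<in> carrier_mat N N" "Q \<in> carrier_mat N N" and PQ: "P * Q = 1\<^sub>m N"
    using similar_mat_witD2[OF A sim] by auto
  have B: "B \<in> carrier_mat N N"
    using A by (auto simp: B_def)
  obtain v where v: "v \<in> carrier_vec N" "vnorm2 v = 1" "sigma_min B = vnorm2 (B *\<^sub>v v)"
    using sigma_min_attained[OF B N] .
  define w where "w = Q *\<^sub>v v"
  have w: "w \<in> carrier_vec N"
    using carr v by (simp add: w_def)
  have "vnorm2 w \<le> S * vnorm2 ((J - \<mu> \<cdot>\<^sub>m 1\<^sub>m N) *\<^sub>v w)"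
    using vnorm2_le_shifted_jordan[where ns = ns, OF \<delta> gap] w jordan_decomp_size[OF A dec]
    by (simp add: S_def J_def)
  also have "(J - \<mu> \<cdot>\<^sub>m 1\<^sub>m N) *\<^sub>v w = Q *\<^sub>v (B *\<^sub>v v)"
    using shifted_similar_mat_wit_mult_vec[OF sim A v(1)] by (simp add: w_def B_def)
  also have "S * vnorm2 (Q *\<^sub>v (B *\<^sub>v v)) \<le> S * (spec_norm Q * sigma_min B)"
    using spec_norm_mult_vec_le[of "B *\<^sub>v v" Q] carr B v \<delta>
    by (intro mult_left_mono) (auto simp: S_def intro!: sum_nonneg)
  finally have w_le: "vnorm2 w \<le> S * (spec_norm Q * sigma_min B)" .
  have "1 = vnorm2 (P *\<^sub>v w)"
    using carr v PQ by (simp add: w_def flip: assoc_mult_mat_vec)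
  also have "\<dots> \<le> spec_norm P * vnorm2 w"
    using carr w by (intro spec_norm_mult_vec_le) auto
  also have "\<dots> \<le> spec_norm P * (S * (spec_norm Q * sigma_min B))"
    using w_le spec_norm_nonneg[of P] carr N by (intro mult_left_mono) auto
  finally show ?thesis
    by (simp add: S_def B_def)
qed

lemma jordan_decomp_sigma_min_lower_bound:
  fixes A :: "complex mat" and \<mu> :: complex and \<delta> :: real
  assumes A: "A \<in> carrier_mat N N" and N: "0 < N" and dec: "jordan_decomp A P Q ns"
    and \<delta>: "0 < \<delta>" "\<delta> \<le> 2"
    and gap: "\<And>n a. (n, a) \<in> set ns \<Longrightarrow> \<delta> \<le> cmod (a - \<mu>) \<and> n \<le> m"
  shows "(\<delta> / 3) ^ m \<le> spec_norm P * spec_norm Q * sigma_min (A - \<mu> \<cdot>\<^sub>m 1\<^sub>m N)"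
proof -
  define S where "S = (\<Sum>k<m. 1 / \<delta> ^ Suc k)"
  define C where "C = spec_norm P * spec_norm Q * sigma_min (A - \<mu> \<cdot>\<^sub>m 1\<^sub>m N)"
  have "1 \<le> S * C"
    using jordan_decomp_sigma_min_bound[OF A N dec \<delta>(1) gap] by (simp add: S_def C_def ac_simps)
  then have "\<delta> ^ m \<le> (\<delta> ^ m * S) * C"
    using \<delta> by (simp add: ac_simps)
  also have "\<dots> \<le> 3 ^ m * C"
  proof (rule mult_right_mono)
    show "\<delta> ^ m * S \<le> 3 ^ m"
      unfolding S_def pow_mult_sum_inverse_pow[OF \<delta>(1)] using \<delta>
      by (intro geometric_sum_le_pow_3) auto
    have "0 \<le> S"
      using \<delta> by (auto simp: S_def intro!: sum_nonneg)
    with \<open>1 \<le> S * C\<close> show "0 \<le> C"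
      using mult_nonneg_nonpos[of S C] by fastforce
  qed
  finally show ?thesis
    by (simp add: C_def power_divide field_simps)
qed

lemma jordan_kappa_sigma_min_lower_bound:
  fixes A :: "complex mat" and \<mu> :: complex and \<delta> :: real
  assumes A: "A \<in> carrier_mat N N" and N: "0 < N" and dec: "jordan_decomp A P Q ns"
    and \<delta>: "0 < \<delta>" "\<delta> \<le> 2"
    and gap: "\<And>n a. (n, a) \<in> set ns \<Longrightarrow> \<delta> \<le> cmod (a - \<mu>) \<and> n \<le> m"
  shows "(\<delta> / 3) ^ m \<le> jordan_kappa A * sigma_min (A - \<mu> \<cdot>\<^sub>m 1\<^sub>m N)"
proof -
  define C where "C = sigma_min (A - \<mu> \<cdot>\<^sub>m 1\<^sub>m N)"
  define K where "K = {spec_norm P * spec_norm Q | P Q ns. jordan_decomp A P Q ns}"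
  have bound: "(\<delta> / 3) ^ m \<le> s * C" if s: "s \<in> K" for s
  proof -
    obtain P' Q' ns' where s: "s = spec_norm P' * spec_norm Q'"
      and dec': "jordan_decomp A P' Q' ns'"
      using s by (auto simp: K_def)
    have "set ns' = set ns"
      using jordan_nf_unique jordan_decomp_jordan_nf dec dec' by blast
    then show ?thesis
      using jordan_decomp_sigma_min_lower_bound[OF A N dec' \<delta>] gap by (simp add: s C_def)
  qed
  have PQ: "spec_norm P * spec_norm Q \<in> K"
    using dec by (auto simp: K_def)
  have "0 < (\<delta> / 3) ^ m"
    using \<delta>(1) by simp
  then have "C \<noteq> 0"
    using bound[OF PQ] by auto
  moreover have "0 \<le> C"
    unfolding C_def using A N by (intro sigma_min_nonneg[of _ N]) auto
  ultimately have C: "0 < C"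
    by simp
  have "(\<delta> / 3) ^ m / C \<le> Inf K"
    using bound C PQ by (intro cInf_greatest) (auto simp: divide_le_eq)
  then show ?thesis
    using C by (simp add: jordan_kappa_def K_def C_def divide_le_eq)
qed

lemma le_powr_inverse_if_pow_le:
  fixes x y :: real
  assumes "0 \<le> x" "0 < m" "x ^ m \<le> y"
  shows "x \<le> y powr (1 / m)"
proof (cases "x = 0")
  case False
  then have "x = (x ^ m) powr (1 / m)"
    using assms by (simp add: powr_realpow[symmetric] powr_powr)
  also have "\<dots> \<le> y powr (1 / m)"
    using assms by (intro powr_mono2) auto
  finally show ?thesis .
qed simp

lemma dist_spectrum_le_root_sigma_min:
  fixes A :: "complex mat" and \<mu> :: complex and \<delta> K :: real and m :: nat
  assumes A: "A \<in> carrier_mat N N" and N: "0 < N" and dec: "jordan_decomp A P Q ns"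
    and \<delta>: "0 \<le> \<delta>" "\<delta> \<le> 2" and m: "0 < m"
    and dist: "\<And>n a. (n, a) \<in> set ns \<Longrightarrow> \<delta> \<le> cmod (\<mu> - a)"
    and size: "\<forall>(n, a) \<in> set ns. n \<le> m"
    and K: "jordan_kappa A \<le> K"
  shows "\<delta> \<le> 3 * (K * sigma_min (A - \<mu> \<cdot>\<^sub>m 1\<^sub>m N)) powr (1 / m)"
proof (cases "\<delta> = 0")
  case False
  have B: "A - \<mu> \<cdot>\<^sub>m 1\<^sub>m N \<in> carrier_mat N N"
    using A by auto
  have "\<delta> \<le> cmod (a - \<mu>) \<and> n \<le> m" if "(n, a) \<in> set ns" for n a
    using dist[OF that] size that by (auto simp: norm_minus_commute)
  then have "(\<delta> / 3) ^ m \<le> jordan_kappa A * sigma_min (A - \<mu> \<cdot>\<^sub>m 1\<^sub>m N)"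
    using jordan_kappa_sigma_min_lower_bound[OF A N dec _ \<delta>(2)] \<delta>(1) False by simp
  also have "\<dots> \<le> K * sigma_min (A - \<mu> \<cdot>\<^sub>m 1\<^sub>m N)"
    using K sigma_min_nonneg[OF B N] by (simp add: mult_right_mono)
  finally have "\<delta> / 3 \<le> (K * sigma_min (A - \<mu> \<cdot>\<^sub>m 1\<^sub>m N)) powr (1 / m)"
    using \<delta>(1) m by (intro le_powr_inverse_if_pow_le) auto
  then show ?thesis
    by simp
qed simp

theorem lemma1:
  fixes A P Q :: "complex mat" and N m_max :: nat and n_as :: "(nat \<times> complex) list"
    and K :: real and \<mu> :: complex
  assumes "A \<in> carrier_mat N N" and "N > 0"
    and "spec_norm A \<le> 1"
    and "jordan_decomp A P Q n_as"
    and "\<forall>(n, a) \<in> set n_as. n \<le> m_max"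
    and "K \<ge> jordan_kappa A"
    and "cmod \<mu> \<le> 1"
  shows "sigma_min (A - \<mu> \<cdot>\<^sub>m 1\<^sub>m N) \<le> Min {cmod (\<mu> - lam) | n lam. (n, lam) \<in> set n_as}
       \<and> Min {cmod (\<mu> - lam) | n lam. (n, lam) \<in> set n_as}
           \<le> 3 * (K * sigma_min (A - \<mu> \<cdot>\<^sub>m 1\<^sub>m N)) powr (1 / real m_max)"
proof -
  note A = assms(1) and N = assms(2) and dec = assms(4)
  define E where "E = {cmod (\<mu> - lam) | n lam. (n, lam) \<in> set n_as}"
  have "E = (\<lambda>na. cmod (\<mu> - snd na)) ` set n_as"
    by (force simp: E_def)
  moreover have "n_as \<noteq> []"
    using jordan_decomp_size[OF A dec] N by auto
  ultimately have E: "finite E" "E \<noteq> {}"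
    by auto
  then obtain n0 a0 where a0: "(n0, a0) \<in> set n_as" "Min E = cmod (\<mu> - a0)"
    using Min_in unfolding E_def by blast
  have dist: "Min E \<le> cmod (\<mu> - a)" if "(n, a) \<in> set n_as" for n a
    using that E(1) by (intro Min_le) (auto simp: E_def)
  have eig: "eigenvalue A a0"
    using jordan_decomp_eigenvalue[OF A dec a0(1)] .
  have "0 \<le> Min E" "Min E \<le> 2"
    using norm_triangle_ineq4[of \<mu> a0] assms(3,7) norm_eigenvalue_le_spec_norm[OF A eig] a0(2)
    by simp_all
  moreover have "0 < m_max"
    using a0(1) dec assms(5) by (fastforce simp: jordan_decomp_def)
  ultimately have "Min E \<le> 3 * (K * sigma_min (A - \<mu> \<cdot>\<^sub>m 1\<^sub>m N)) powr (1 / real m_max)"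
    by (rule dist_spectrum_le_root_sigma_min[OF A N dec]) (use dist assms(5,6) in auto)
  then show ?thesis
    using sigma_min_shift_le_dist_eigenvalue[OF A N eig] a0(2) by (simp add: E_def)
qed

end
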